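(* Let $A$ be a $J_p$-set in $(\mathbb{N},+)$ and let $B\subseteq\mathbb{N}$ be finite. Then $A\setminus B$ is a $J_p$-set in $(\mathbb{N},+)$.
   Context: $\mathbb{N}=\{1,2,\dots\}$. $\mathbb{P}$ denotes the set of polynomials with coefficients in $\mathbb{N}\cup\{0\}$ and zero constant term which map $\mathbb{N}$ into $\mathbb{N}$. $\mathcal{P}_f(X)$ is the set of nonempty finite subsets of $X$, and ${}^{\mathbb{N}}\mathbb{N}$ the set of sequences in $\mathbb{N}$. For $R\in\mathcal{P}_f(\mathbb{P})$, $L\in\mathcal{P}_f({}^{\mathbb{N}}\mathbb{N})$, $a\in\mathbb{N}$, $H\in\mathcal{P}_f(\mathbb{N})$, $S_{R,L}(a,H)=\{a+f(\sum_{t\in H}g(t)): f\in R, g\in L\}$. $A\subseteq\mathbb{N}$ is a $J_p$-set if for every $R\in\mathcal{P}_f(\mathbb{P})$ and $L\in\mathcal{P}_f({}^{\mathbb{N}}\mathbb{N})$ there exist $a\in\mathbb{N}$ and $H\in\mathcal{P}_f(\mathbb{N})$ with $S_{R,L}(a,H)\subseteq A$. *)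

theory Defs
  imports "HOL-Computational_Algebra.Polynomial"
begin

text \<open>N = {1,2,...} is represented by the positive naturals.
  The class P: polynomials with coefficients in N \<union> {0}, zero constant term,
  mapping N into N.\<close>
definition Pset :: "nat poly set" where
  "Pset = {f. poly f 0 = 0 \<and> (\<forall>n::nat. n \<ge> 1 \<longrightarrow> poly f n \<ge> 1)}"

definition Seqs :: "(nat \<Rightarrow> nat) set" where
  "Seqs = {g. \<forall>t::nat. t \<ge> 1 \<longrightarrow> g t \<ge> 1}"

definition S_RL :: "nat poly set \<Rightarrow> (nat \<Rightarrow> nat) set \<Rightarrow> nat \<Rightarrow> nat set \<Rightarrow> nat set" where
  "S_RL R L a H = {a + poly f (\<Sum>t\<in>H. g t) | f g. f \<in> R \<and> g \<in> L}"

definition Jp_set :: "nat set \<Rightarrow> bool" where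
  "Jp_set A \<longleftrightarrow> A \<subseteq> {1..} \<and>
     (\<forall>R L. finite R \<and> R \<noteq> {} \<and> R \<subseteq> Pset \<and> finite L \<and> L \<noteq> {} \<and> L \<subseteq> Seqs \<longrightarrow>
        (\<exists>a H. a \<ge> 1 \<and> finite H \<and> H \<noteq> {} \<and> H \<subseteq> {1..} \<and> S_RL R L a H \<subseteq> A))"

end

theory Submission
  imports Defs
begin

text \<open>The witnesses \<open>(a, H)\<close> of a \<open>J\<^sub>p\<close>-set can be pushed beyond any bound \<open>n\<close>, so
  finitely many points do not matter. Put \<open>K = n + 1\<close> and replace every sequence \<open>g\<close> by its
  block sums \<open>g' t = (\<Sum>i<K. g (K t + i))\<close>. A witness \<open>(a, H)\<close> for the block sums yields the
  witness \<open>(a, H')\<close> for the original sequences, where \<open>H'\<close> is the union of the blocks indexed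
  by \<open>H\<close>, since \<open>(\<Sum>t\<in>H. g' t) = (\<Sum>s\<in>H'. g s)\<close>. Every block sum is at least \<open>K\<close>, and
  \<open>f x \<ge> x\<close> for \<open>f \<in> Pset\<close>, so all elements of \<open>S_RL R L a H'\<close> exceed \<open>n\<close>.\<close>

lemma mult_poly_one_le_poly:
  fixes f :: "nat poly"
  assumes "poly f 0 = 0"
  shows "n * poly f 1 \<le> poly f n"
proof (cases "n = 0")
  case True
  with assms show ?thesis by simp
next
  case False
  have "coeff f i * n \<le> coeff f i * n ^ i" for i
  proof (cases "i = 0")
    case True
    with assms show ?thesis by (simp add: poly_0_coeff_0)
  next
    case False
    with \<open>n \<noteq> 0\<close> show ?thesis by (simp add: self_le_power)
  qed
  then have "(\<Sum>i\<le>degree f. coeff f i * n) \<le> (\<Sum>i\<le>degree f. coeff f i * n ^ i)"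
    by (rule sum_mono)
  then show ?thesis
    by (simp add: poly_altdef sum_distrib_left mult.commute)
qed

lemma Pset_poly_ge_self:
  assumes "f \<in> Pset"
  shows "n \<le> poly f n"
proof -
  have "poly f 0 = 0" "1 \<le> poly f 1"
    using assms by (auto simp: Pset_def)
  then have "n * 1 \<le> n * poly f 1"
    by (intro mult_le_mono2)
  also have "\<dots> \<le> poly f n"
    using \<open>poly f 0 = 0\<close> by (rule mult_poly_one_le_poly)
  finally show ?thesis by simp
qed

definition block_sum :: "nat \<Rightarrow> (nat \<Rightarrow> nat) \<Rightarrow> nat \<Rightarrow> nat" where
  "block_sum K g t = (\<Sum>i<K. g (K * t + i))"

definition blocks :: "nat \<Rightarrow> nat set \<Rightarrow> nat set" where
  "blocks K H = (\<lambda>(t, i). K * t + i) ` (H \<times> {..<K})"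

lemma inj_on_block_index: "inj_on (\<lambda>(t, i). K * t + i) (H \<times> {..<K::nat})"
proof (rule inj_onI, clarify)
  fix t i t' i' :: nat
  assume "i < K" "i' < K" "K * t + i = K * t' + i'"
  then have "(K * t + i) div K = (K * t' + i') div K" "(K * t + i) mod K = (K * t' + i') mod K"
    by simp_all
  with \<open>i < K\<close> \<open>i' < K\<close> show "t = t' \<and> i = i'" by simp
qed

lemma sum_blocks: "sum g (blocks K H) = (\<Sum>t\<in>H. block_sum K g t)"
  unfolding blocks_def block_sum_def sum.reindex[OF inj_on_block_index] sum.cartesian_product
  by (simp add: split_def)

lemma finite_blocks: "finite H \<Longrightarrow> finite (blocks K H)"
  by (simp add: blocks_def)

lemma blocks_nonempty: "H \<noteq> {} \<Longrightarrow> K \<noteq> 0 \<Longrightarrow> blocks K H \<noteq> {}"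
  by (auto simp: blocks_def)

lemma blocks_subset_positive:
  assumes "H \<subseteq> {1..}" "K \<noteq> 0"
  shows "blocks K H \<subseteq> {1..}"
proof
  fix s assume "s \<in> blocks K H"
  then obtain t i where "t \<in> H" "s = K * t + i"
    by (auto simp: blocks_def)
  with assms show "s \<in> {1..}" by (auto simp: Suc_le_eq)
qed

lemma block_sum_ge:
  assumes "g \<in> Seqs" "1 \<le> t"
  shows "K \<le> block_sum K g t"
proof -
  have "1 \<le> g (K * t + i)" if "i < K" for i
    using assms that by (auto simp: Seqs_def Suc_le_eq)
  then have "(\<Sum>i<K. 1) \<le> block_sum K g t"
    unfolding block_sum_def by (intro sum_mono) simp
  then show ?thesis by simp
qed

lemma block_sum_in_Seqs:
  assumes "g \<in> Seqs" "K \<noteq> 0"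
  shows "block_sum K g \<in> Seqs"
  unfolding Seqs_def
proof (intro CollectI allI impI)
  fix t :: nat assume "1 \<le> t"
  then have "K \<le> block_sum K g t" by (rule block_sum_ge[OF assms(1)])
  with assms(2) show "1 \<le> block_sum K g t" by linarith
qed

lemma S_RL_blocks: "S_RL R L a (blocks K H) = S_RL R (block_sum K ` L) a H"
  by (auto simp: S_RL_def sum_blocks)

lemma S_RL_ge:
  assumes "R \<subseteq> Pset" and "\<And>g. g \<in> L \<Longrightarrow> m \<le> sum g H" and "x \<in> S_RL R L a H"
  shows "m \<le> x"
proof -
  obtain f g where "f \<in> R" "g \<in> L" "x = a + poly f (sum g H)"
    using assms(3) by (auto simp: S_RL_def)
  have "m \<le> sum g H"
    using \<open>g \<in> L\<close> by (rule assms(2))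
  also have "\<dots> \<le> poly f (sum g H)"
    using \<open>f \<in> R\<close> assms(1) by (intro Pset_poly_ge_self) auto
  finally show ?thesis
    using \<open>x = a + poly f (sum g H)\<close> by simp
qed

lemma Jp_setI:
  assumes "A \<subseteq> {1..}"
    and "\<And>R L. \<lbrakk>finite R; R \<noteq> {}; R \<subseteq> Pset; finite L; L \<noteq> {}; L \<subseteq> Seqs\<rbrakk> \<Longrightarrow>
      \<exists>a H. 1 \<le> a \<and> finite H \<and> H \<noteq> {} \<and> H \<subseteq> {1..} \<and> S_RL R L a H \<subseteq> A"
  shows "Jp_set A"
  using assms by (simp add: Jp_set_def)

lemma Jp_setD:
  assumes "Jp_set A" "finite R" "R \<noteq> {}" "R \<subseteq> Pset" "finite L" "L \<noteq> {}" "L \<subseteq> Seqs"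
  obtains a H where "1 \<le> a" "finite H" "H \<noteq> {}" "H \<subseteq> {1..}" "S_RL R L a H \<subseteq> A"
proof -
  have "\<exists>a H. 1 \<le> a \<and> finite H \<and> H \<noteq> {} \<and> H \<subseteq> {1..} \<and> S_RL R L a H \<subseteq> A"
    using assms unfolding Jp_set_def by simp
  with that show thesis by blast
qed

lemma Jp_set_positive: "Jp_set A \<Longrightarrow> A \<subseteq> {1..}"
  by (simp add: Jp_set_def)

lemma Jp_set_superset:
  assumes "Jp_set A" "A \<subseteq> A'" "A' \<subseteq> {1..}"
  shows "Jp_set A'"
proof (rule Jp_setI)
  fix R L
  assume "finite R" "R \<noteq> {}" "R \<subseteq> Pset" "finite L" "L \<noteq> {}" "L \<subseteq> Seqs"
  with assms(1) obtain a H where "1 \<le> a" "finite H" "H \<noteq> {}" "H \<subseteq> {1..}" "S_RL R L a H \<subseteq> A"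
    by (rule Jp_setD)
  with assms(2) show "\<exists>a H. 1 \<le> a \<and> finite H \<and> H \<noteq> {} \<and> H \<subseteq> {1..} \<and> S_RL R L a H \<subseteq> A'"
    by blast
qed (fact assms(3))

lemma Jp_set_Int_greaterThan:
  assumes "Jp_set A"
  shows "Jp_set (A \<inter> {n<..})"
proof (rule Jp_setI)
  show "A \<inter> {n<..} \<subseteq> {1..}"
    using Jp_set_positive[OF assms] by blast
next
  fix R L
  assume R: "finite R" "R \<noteq> {}" "R \<subseteq> Pset" and L: "finite L" "L \<noteq> {}" "L \<subseteq> Seqs"
  define K where "K = Suc n"
  have "finite (block_sum K ` L)" "block_sum K ` L \<noteq> {}" "block_sum K ` L \<subseteq> Seqs"
    using L block_sum_in_Seqs by (auto simp: K_def)
  with assms R obtain a H where aH: "1 \<le> a" "finite H" "H \<noteq> {}" "H \<subseteq> {1..}"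
    and SA: "S_RL R (block_sum K ` L) a H \<subseteq> A"
    by (rule Jp_setD)
  have "K \<le> sum g (blocks K H)" if "g \<in> L" for g
  proof -
    obtain t where "t \<in> H" using aH(3) by blast
    then have "K \<le> block_sum K g t"
      using aH(4) L that by (intro block_sum_ge) auto
    also have "\<dots> \<le> (\<Sum>t\<in>H. block_sum K g t)"
      by (rule member_le_sum[OF \<open>t \<in> H\<close> _ aH(2)]) simp
    finally show ?thesis by (simp add: sum_blocks)
  qed
  then have "K \<le> x" if "x \<in> S_RL R L a (blocks K H)" for x
    using that by (rule S_RL_ge[OF R(3)])
  then have "S_RL R L a (blocks K H) \<subseteq> {n<..}"
    by (auto simp: K_def Suc_le_eq)
  moreover have "S_RL R L a (blocks K H) \<subseteq> A"
    using SA by (simp add: S_RL_blocks)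
  moreover have "finite (blocks K H)"
    using aH(2) by (rule finite_blocks)
  moreover have "blocks K H \<noteq> {}"
    using aH(3) by (rule blocks_nonempty) (simp add: K_def)
  moreover have "blocks K H \<subseteq> {1..}"
    using aH(4) by (rule blocks_subset_positive) (simp add: K_def)
  ultimately show "\<exists>a H. 1 \<le> a \<and> finite H \<and> H \<noteq> {} \<and> H \<subseteq> {1..} \<and> S_RL R L a H \<subseteq> A \<inter> {n<..}"
    using aH(1) by blast
qed

theorem theorem5p3:
  fixes A B :: "nat set"
  assumes "Jp_set A" and "B \<subseteq> {1..}" and "finite B"
  shows "Jp_set (A - B)"
proof -
  obtain n where "B \<subseteq> {..n}"
    using \<open>finite B\<close> finite_nat_iff_bounded_le by blast
  then have "A \<inter> {n<..} \<subseteq> A - B" by auto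
  moreover have "A - B \<subseteq> {1..}"
    using Jp_set_positive[OF \<open>Jp_set A\<close>] by blast
  ultimately show ?thesis
    using Jp_set_superset Jp_set_Int_greaterThan \<open>Jp_set A\<close> by blast
qed

end
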